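(* Let $\mathcal{P}$, $\mathcal{Q}$ and $\mathcal{R}$ be orthogonal decompositions of the spaces $V_\Omega$, $V_{\Upsilon}$ and $V_{\Gamma}$, respectively, with $V_{\Upsilon} \leq V_\Omega$ and $V_{\Gamma} \leq V_\Omega$. If $\mathcal{Q}$ is structure balanced in relation to $\mathcal{P}$ with efficiency factors $\lambda_{\mathbf{PQ}}$, and $\mathcal{R}$ is structure balanced in relation to $\mathcal{P} \vartriangleright\mathcal{Q}$ with efficiency factors $\lambda_{\mathbf{P} \vartriangleright\mathbf{Q}, \mathbf{R}}$ and $\lambda_{\mathbf{P} \vdash\mathcal{Q}, \mathbf{R}}$, then: (a) $\mathcal{R}$ is structure balanced in relation to $\mathcal{P}$ with efficiency matrix $\Lambda_{\mathcal{PR}}$ whose entries are $\lambda_{\mathbf{P} \mathbf{R}} = \big( \lambda_{\mathbf{P} \vdash \mathcal{Q}, \mathbf{R}} + \sum_{\mathbf{Q} \in\mathcal{Q}}' \lambda_{\mathbf{P} \vartriangleright\mathbf{Q}, \mathbf{R}} \big)$; (b) the decomposition $(\mathcal{P} \vartriangleright\mathcal{Q}) \vartriangleright \mathcal{R}$ is \begin{eqnarray*} & & \{(\mathbf{P} \vartriangleright\mathbf{Q}) \vartriangleright\mathbf{R}\colon\mathbf{P} \in\mathcal{P}, \mathbf{Q} \in\mathcal{Q}, \mathbf{R} \in\mathcal{R}, \lambda_{\mathbf{PQ}} \neq0, \lambda_{\mathbf{P} \vartriangleright \mathbf{Q}, \mathbf{R}} \neq0 \} \\ &&\qquad{}\cup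 \{(\mathbf{P} \vartriangleright\mathbf{Q}) \vdash\mathcal{R}\colon\mathbf{P} \in\mathcal{P}, \mathbf{Q} \in\mathcal{Q}, \lambda_{\mathbf{PQ}} \neq0 \} \\ &&\qquad{}\cup \{(\mathbf{P} \vdash\mathcal{Q}) \vartriangleright\mathbf{R}\colon\mathbf{P} \in\mathcal{P}, \mathbf{R} \in\mathcal{R}, \lambda_{\mathbf{P} \vdash\mathcal{Q}, \mathbf{R}} \neq0 \} \\ &&\qquad{}\cup \{(\mathbf{P} \vdash\mathcal{Q}) \vdash\mathcal{R}\colon\mathbf{P} \in\mathcal{P} \}. \end{eqnarray*}
   Context: $\Omega$ is a finite set of observational units and $V_\Omega$ the space of real vectors indexed by $\Omega$; $\Upsilon$ and $\Gamma$ are further finite sets whose vector spaces are identified (via allocation functions $\Omega\to\Upsilon$, $\Omega\to\Gamma$) with subspaces $V_\Upsilon, V_\Gamma$ of $V_\Omega$. An orthogonal decomposition (structure) of a space is identified with the complete set of mutually orthogonal idempotent (projection) matrices onto its subspaces; all these are regarded as $\Omega\times\Omega$ matrices. For idempotents $\mathbf{P}$ and $\mathbf{Q}$, $\mathbf{Q}$ has first-order balance in relation to $\mathbf{P}$ if $\mathbf{QPQ}=\lambda_{\mathbf{PQ}}\mathbf{Q}$ for a scalar $\lambda_{\mathbf{PQ}}$ (the efficiency factor); if $\lambda_{\mathbf{PQ}}\neq 0$, $\mathbf{P}\vartriangleright\mathbf{Q}=\lambda_{\mathbf{PQ}}^{-1}\mathbf{PQP}$, the projector onto $\operatorname{Im}\mathbf{PQ}$.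 A structure $\mathcal{Q}$ is structure balanced in relation to a structure $\mathcal{P}$ if every element of $\mathcal{Q}$ has first-order balance in relation to every element of $\mathcal{P}$ and $\mathbf{Q}_1\mathbf{P}\mathbf{Q}_2=\mathbf{0}$ for all $\mathbf{P}\in\mathcal{P}$ and distinct $\mathbf{Q}_1,\mathbf{Q}_2\in\mathcal{Q}$. Then $\mathbf{P}\vdash\mathcal{Q}=\mathbf{P}-\sum'_{\mathbf{Q}\in\mathcal{Q}}\mathbf{P}\vartriangleright\mathbf{Q}$, where $\sum'_{\mathbf{Q}\in\mathcal{Q}}$ denotes summation over those $\mathbf{Q}$ with $\lambda_{\mathbf{PQ}}\neq0$; and the decomposition $\mathcal{P}\vartriangleright\mathcal{Q}$ of $V_\Omega$ consists of the (nonzero) idempotents $\mathbf{P}\vartriangleright\mathbf{Q}$ ($\lambda_{\mathbf{PQ}}\neq0$) and $\mathbf{P}\vdash\mathcal{Q}$ for $\mathbf{P}\in\mathcal{P}$, $\mathbf{Q}\in\mathcal{Q}$. The operations $\vartriangleright$ and $\vdash$ are applied in the same way to elements of $\mathcal{P}\vartriangleright\mathcal{Q}$ and $\mathcal{R}$; $\lambda_{\mathbf{P} \vartriangleright\mathbf{Q}, \mathbf{R}}$ and $\lambda_{\mathbf{P} \vdash\mathcal{Q}, \mathbf{R}}$ are the efficiency factors of $\mathbf{R}$ in relation to $\mathbf{P}\vartriangleright\mathbf{Q}$ and $\mathbf{P}\vdash\mathcal{Q}$. This is the setting of unrandomized-inclusive randomizations: $\Upsilon$ is randomized to $\Omega$,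 then $\Gamma$ is randomized to $\Omega$ taking account of the first randomization. *)

theory Defs
  imports "HOL-Analysis.Analysis"
begin

text \<open>Observational units Omega are modelled by a finite type 'n; Omega x Omega real
matrices are elements of real^'n^'n; V_Omega is the whole space real^'n.\<close>

definition orth_proj :: "real^'n^'n \<Rightarrow> bool" where
  "orth_proj M \<longleftrightarrow> M ** M = M \<and> transpose M = M"

definition orth_decomp :: "(real^'n^'n) set \<Rightarrow> (real^'n) set \<Rightarrow> bool" where
  "orth_decomp S V \<longleftrightarrow> subspace V \<and> finite S
     \<and> (\<forall>P\<in>S. orth_proj P \<and> P \<noteq> 0)
     \<and> (\<forall>P1\<in>S. \<forall>P2\<in>S. P1 \<noteq> P2 \<longrightarrow> P1 ** P2 = 0)
     \<and> (\<forall>x. (\<Sum>S) *v x \<in> V) \<and> (\<forall>x\<in>V. (\<Sum>S) *v x = x)"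

definition first_order_balance :: "real^'n^'n \<Rightarrow> real^'n^'n \<Rightarrow> bool" where
  "first_order_balance Q P \<longleftrightarrow> (\<exists>l. Q ** P ** Q = l *\<^sub>R Q)"

definition structure_balanced :: "(real^'n^'n) set \<Rightarrow> (real^'n^'n) set \<Rightarrow> bool" where
  "structure_balanced Qs Ps \<longleftrightarrow>
     (\<forall>Q\<in>Qs. \<forall>P\<in>Ps. first_order_balance Q P)
     \<and> (\<forall>P\<in>Ps. \<forall>Q1\<in>Qs. \<forall>Q2\<in>Qs. Q1 \<noteq> Q2 \<longrightarrow> Q1 ** P ** Q2 = 0)"

text \<open>Efficiency factor lambda_PQ of Q in relation to P (unique when Q is nonzero).\<close>
definition eff :: "real^'n^'n \<Rightarrow> real^'n^'n \<Rightarrow> real" where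
  "eff P Q = (THE l. Q ** P ** Q = l *\<^sub>R Q)"

definition tri :: "real^'n^'n \<Rightarrow> real^'n^'n \<Rightarrow> real^'n^'n" where
  "tri P Q = inverse (eff P Q) *\<^sub>R (P ** Q ** P)"

definition residual :: "real^'n^'n \<Rightarrow> (real^'n^'n) set \<Rightarrow> real^'n^'n" where
  "residual P Qs = P - (\<Sum>Q\<in>{Q\<in>Qs. eff P Q \<noteq> 0}. tri P Q)"

definition decomp :: "(real^'n^'n) set \<Rightarrow> (real^'n^'n) set \<Rightarrow> (real^'n^'n) set" where
  "decomp Ps Qs = ({tri P Q | P Q. P \<in> Ps \<and> Q \<in> Qs \<and> eff P Q \<noteq> 0}
                   \<union> {residual P Qs | P. P \<in> Ps}) - {0}"

end

theory Submission
  imports Defs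
begin

text \<open>By the definition of the residual, every P in Ps splits as
P = residual P Qs + (sum of tri P Q over Q with eff P Q \<noteq> 0), a sum of members of
decomp Ps Qs or zero matrices. Structure balance of Rs in relation to decomp Ps Qs says
that R1 ** X ** R2 vanishes for R1 \<noteq> R2 and is the multiple eff X R of R for
R1 = R2 = R; both properties are additive in X, so they pass to P, with the efficiency
factors adding up. Part (b) is then bookkeeping: the zero members of decomp Ps Qs only
produce the zero matrix.\<close>

lemma matrix_add_rdistrib: "(B + C) ** A = B ** A + C ** (A::'a::semiring_1^'p^'n)"
  by (vector matrix_matrix_mult_def sum.distrib[symmetric] field_simps)

lemma matrix_sandwich_add: "L ** (X + Y) ** R = L ** X ** R + L ** Y ** (R::'a::semiring_1^'p^'n)"
  by (simp add: matrix_add_ldistrib matrix_add_rdistrib)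

lemma matrix_sandwich_sum:
  "finite I \<Longrightarrow> L ** (\<Sum>i\<in>I. f i) ** R = (\<Sum>i\<in>I. L ** f i ** (R::'a::semiring_1^'p^'n))"
  by (induction I rule: finite_induct) (simp_all add: matrix_sandwich_add)

lemma eff_eqI:
  assumes "(R::real^'n^'n) \<noteq> 0" "R ** X ** R = l *\<^sub>R R"
  shows "eff X R = l"
  unfolding eff_def
proof (rule the_equality)
  fix m assume "R ** X ** R = m *\<^sub>R R"
  with assms show "m = l" by (simp add: scaleR_cancel_right)
qed (fact assms(2))

lemma eff_zero_left: "(R::real^'n^'n) \<noteq> 0 \<Longrightarrow> eff 0 R = 0"
  by (rule eff_eqI) simp_all

lemma eff_zero_left_mem: "0 \<notin> Rs \<Longrightarrow> R \<in> Rs \<Longrightarrow> eff 0 R = 0"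
  by (rule eff_zero_left) blast

lemma residual_zero_left:
  assumes "0 \<notin> Rs"
  shows "residual 0 Rs = 0"
proof -
  have "{R \<in> Rs. eff 0 R \<noteq> 0} = {}"
    using eff_zero_left_mem[OF assms] by blast
  then show ?thesis
    unfolding residual_def by (simp only: sum.empty diff_zero)
qed

lemma residual_add_sum_tri: "P = residual P Qs + (\<Sum>Q\<in>{Q\<in>Qs. eff P Q \<noteq> 0}. tri P Q)"
  unfolding residual_def by (rule diff_add_cancel[symmetric])

lemma tri_mem_decomp: "P \<in> Ps \<Longrightarrow> Q \<in> Qs \<Longrightarrow> eff P Q \<noteq> 0 \<Longrightarrow> tri P Q \<in> insert 0 (decomp Ps Qs)"
  unfolding decomp_def by blast

lemma residual_mem_decomp: "P \<in> Ps \<Longrightarrow> residual P Qs \<in> insert 0 (decomp Ps Qs)"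
  unfolding decomp_def by blast

lemma structure_balanced_sandwich:
  assumes balanced: "structure_balanced Rs Ds" and "0 \<notin> Rs"
    and X: "X \<in> insert 0 Ds" and R: "R1 \<in> Rs" "R2 \<in> Rs"
  shows "R1 ** X ** R2 = (if R1 = R2 then eff X R1 *\<^sub>R R1 else 0)"
proof -
  have "R1 \<noteq> 0"
    using R(1) \<open>0 \<notin> Rs\<close> by blast
  show ?thesis
  proof (cases "X = 0")
    case True
    with \<open>R1 \<noteq> 0\<close> show ?thesis
      by (simp add: eff_zero_left)
  next
    case False
    with X have "X \<in> Ds" by simp
    show ?thesis
    proof (cases "R1 = R2")
      case True
      obtain l where l: "R1 ** X ** R1 = l *\<^sub>R R1"
        using balanced \<open>X \<in> Ds\<close> R(1)
        unfolding structure_balanced_def first_order_balance_def by blast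
      from \<open>R1 \<noteq> 0\<close> l have "eff X R1 = l"
        by (rule eff_eqI)
      with l True show ?thesis by simp
    next
      case False
      with balanced \<open>X \<in> Ds\<close> R have "R1 ** X ** R2 = 0"
        unfolding structure_balanced_def by blast
      with False show ?thesis by simp
    qed
  qed
qed

lemma structure_balanced_sandwich_decomp:
  assumes "structure_balanced Rs (decomp Ps Qs)" "0 \<notin> Rs" "finite Qs"
    and "P \<in> Ps" "R1 \<in> Rs" "R2 \<in> Rs"
  shows "R1 ** P ** R2 = (if R1 = R2
           then (eff (residual P Qs) R1 + (\<Sum>Q\<in>{Q\<in>Qs. eff P Q \<noteq> 0}. eff (tri P Q) R1)) *\<^sub>R R1
           else 0)"
proof -
  let ?S = "{Q\<in>Qs. eff P Q \<noteq> 0}"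
  note sandwich = structure_balanced_sandwich[OF assms(1,2) _ assms(5,6)]
  have "finite ?S"
    using assms(3) by simp
  have "R1 ** P ** R2 = R1 ** (residual P Qs + (\<Sum>Q\<in>?S. tri P Q)) ** R2"
    using residual_add_sum_tri[of P Qs] by (rule arg_cong)
  also have "\<dots> = R1 ** residual P Qs ** R2 + (\<Sum>Q\<in>?S. R1 ** tri P Q ** R2)"
    by (simp only: matrix_sandwich_add matrix_sandwich_sum[OF \<open>finite ?S\<close>])
  also have "\<dots> = (if R1 = R2 then eff (residual P Qs) R1 *\<^sub>R R1 else 0)
                   + (\<Sum>Q\<in>?S. if R1 = R2 then eff (tri P Q) R1 *\<^sub>R R1 else 0)"
  proof (rule arg_cong2[where f = "(+)"])
    show "R1 ** residual P Qs ** R2 = (if R1 = R2 then eff (residual P Qs) R1 *\<^sub>R R1 else 0)"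
      by (rule sandwich[OF residual_mem_decomp[OF assms(4)]])
    show "(\<Sum>Q\<in>?S. R1 ** tri P Q ** R2) = (\<Sum>Q\<in>?S. if R1 = R2 then eff (tri P Q) R1 *\<^sub>R R1 else 0)"
    proof (rule sum.cong)
      fix Q assume "Q \<in> ?S"
      with assms(4) have "tri P Q \<in> insert 0 (decomp Ps Qs)"
        by (intro tri_mem_decomp) auto
      then show "R1 ** tri P Q ** R2 = (if R1 = R2 then eff (tri P Q) R1 *\<^sub>R R1 else 0)"
        by (rule sandwich)
    qed (rule refl)
  qed
  finally show ?thesis
    by (cases "R1 = R2") (simp_all add: scaleR_add_left scaleR_sum_left)
qed

lemma decomp_insert_zero:
  assumes "0 \<notin> Rs"
  shows "decomp (insert 0 Ds) Rs = decomp Ds Rs"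
  unfolding decomp_def using eff_zero_left_mem[OF assms] residual_zero_left[OF assms] by auto

lemma insert_zero_decomp:
  "insert 0 (decomp Ps Qs) =
   insert 0 ({tri P Q | P Q. P \<in> Ps \<and> Q \<in> Qs \<and> eff P Q \<noteq> 0} \<union> {residual P Qs | P. P \<in> Ps})"
  unfolding decomp_def by blast

lemma decomp_decomp:
  assumes "0 \<notin> Rs"
  shows "decomp (decomp Ps Qs) Rs =
         ({tri (tri P Q) R | P Q R. P \<in> Ps \<and> Q \<in> Qs \<and> R \<in> Rs \<and> eff P Q \<noteq> 0
                                    \<and> eff (tri P Q) R \<noteq> 0}
          \<union> {residual (tri P Q) Rs | P Q. P \<in> Ps \<and> Q \<in> Qs \<and> eff P Q \<noteq> 0}
          \<union> {tri (residual P Qs) R | P R. P \<in> Ps \<and> R \<in> Rs \<and> eff (residual P Qs) R \<noteq> 0}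
          \<union> {residual (residual P Qs) Rs | P. P \<in> Ps}) - {0}"
    (is "_ = (?TT \<union> ?RT \<union> ?TR \<union> ?RR) - {0}")
proof -
  let ?Tris = "{tri P Q | P Q. P \<in> Ps \<and> Q \<in> Qs \<and> eff P Q \<noteq> 0}"
  let ?Residuals = "{residual P Qs | P. P \<in> Ps}"
  have "decomp (decomp Ps Qs) Rs = decomp (insert 0 (decomp Ps Qs)) Rs"
    by (rule decomp_insert_zero[OF assms, symmetric])
  also have "\<dots> = decomp (insert 0 (?Tris \<union> ?Residuals)) Rs"
    by (simp only: insert_zero_decomp)
  also have "\<dots> = decomp (?Tris \<union> ?Residuals) Rs"
    by (rule decomp_insert_zero[OF assms])
  also have "\<dots> = ({tri X R | X R. X \<in> ?Tris \<union> ?Residuals \<and> R \<in> Rs \<and> eff X R \<noteq> 0}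
                   \<union> {residual X Rs | X. X \<in> ?Tris \<union> ?Residuals}) - {0}"
    unfolding decomp_def ..
  also have "{tri X R | X R. X \<in> ?Tris \<union> ?Residuals \<and> R \<in> Rs \<and> eff X R \<noteq> 0} = ?TT \<union> ?TR"
    by blast
  also have "{residual X Rs | X. X \<in> ?Tris \<union> ?Residuals} = ?RT \<union> ?RR"
    by blast
  finally show ?thesis
    by (simp only: Un_ac)
qed

theorem theorem1:
  fixes Ps Qs Rs :: "(real^'n^'n) set" and VU VG :: "(real^'n) set"
  assumes "orth_decomp Ps UNIV"
    and "orth_decomp Qs VU"
    and "orth_decomp Rs VG"
    and "structure_balanced Qs Ps"
    and "structure_balanced Rs (decomp Ps Qs)"
  shows "(structure_balanced Rs Ps
         \<and> (\<forall>P\<in>Ps. \<forall>R\<in>Rs. eff P R =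
               eff (residual P Qs) R + (\<Sum>Q\<in>{Q\<in>Qs. eff P Q \<noteq> 0}. eff (tri P Q) R)))
         \<and> decomp (decomp Ps Qs) Rs =
         ({tri (tri P Q) R | P Q R. P \<in> Ps \<and> Q \<in> Qs \<and> R \<in> Rs \<and> eff P Q \<noteq> 0
                                    \<and> eff (tri P Q) R \<noteq> 0}
          \<union> {residual (tri P Q) Rs | P Q. P \<in> Ps \<and> Q \<in> Qs \<and> eff P Q \<noteq> 0}
          \<union> {tri (residual P Qs) R | P R. P \<in> Ps \<and> R \<in> Rs \<and> eff (residual P Qs) R \<noteq> 0}
          \<union> {residual (residual P Qs) Rs | P. P \<in> Ps}) - {0}"
proof -
  have "0 \<notin> Rs" and "finite Qs"
    using assms(2,3) unfolding orth_decomp_def by auto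
  note sandwich = structure_balanced_sandwich_decomp[OF assms(5) this]
  let ?eff = "\<lambda>P R. eff (residual P Qs) R + (\<Sum>Q\<in>{Q\<in>Qs. eff P Q \<noteq> 0}. eff (tri P Q) R)"
  have diagonal: "R ** P ** R = ?eff P R *\<^sub>R R" if "P \<in> Ps" "R \<in> Rs" for P R
    using sandwich[OF that that(2)] by simp
  have off_diagonal: "R1 ** P ** R2 = 0" if "P \<in> Ps" "R1 \<in> Rs" "R2 \<in> Rs" "R1 \<noteq> R2" for P R1 R2
    using sandwich[OF that(1-3)] that(4) by simp
  have "structure_balanced Rs Ps"
    unfolding structure_balanced_def first_order_balance_def
    using diagonal off_diagonal by blast
  moreover have "\<forall>P\<in>Ps. \<forall>R\<in>Rs. eff P R = ?eff P R"
  proof (intro ballI)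
    fix P R assume "P \<in> Ps" "R \<in> Rs"
    with \<open>0 \<notin> Rs\<close> have "R \<noteq> 0" by blast
    from this diagonal[OF \<open>P \<in> Ps\<close> \<open>R \<in> Rs\<close>] show "eff P R = ?eff P R"
      by (rule eff_eqI)
  qed
  moreover note decomp_decomp[OF \<open>0 \<notin> Rs\<close>]
  ultimately show ?thesis
    by (intro conjI)
qed

end
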